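(* It is decidable, given a propositional Hilbert-type calculus $\mathbf{C}$ and a finite-valued logic $\mathbf{M}$ over the same language, whether $\mathbf{C}$ is t-sound for $\mathbf{M}$.
   Context: A propositional language has variables $X_1,X_2,\ldots$ and finitely many connectives with arities. A substitution $\sigma$ maps variables to formulas; $F\sigma$ is the result of simultaneously replacing each variable $X$ in $F$ by $\sigma(X)$. A propositional Hilbert-type calculus $\mathbf{C}$ is given by a finite set of axioms (formulas) and a finite set of rules, each consisting of finitely many premise formulas $A_1,\ldots,A_n$ and a conclusion formula $C$. A finite-valued logic $\mathbf{M}$ is given by a finite set $V(\mathbf{M})$ of truth values, designated values $V^+(\mathbf{M})\subseteq V(\mathbf{M})$, and a truth function for each connective; valuations map variables to truth values and extend to formulas; a tautology is a formula that is designated under every valuation. $\mathbf{C}$ is t-sound for $\mathbf{M}$ if all axioms of $\mathbf{C}$ are tautologies of $\mathbf{M}$ and for every rule of $\mathbf{C}$ with premises $A_1,\ldots,A_n$ and conclusion $C$ and every substitution $\sigma$: if $A_1\sigma,\ldots,A_n\sigma$ are all tautologies of $\mathbf{M}$, then $C\sigma$ is a tautology of $\mathbf{M}$. *)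

theory Defs
  imports Main "HOL-Library.Nat_Bijection"
begin

datatype recf = Zero | Succ | Proj nat | Cn recf "recf list" | Pr recf recf | Mn recf

inductive rec_eval :: "recf \<Rightarrow> nat list \<Rightarrow> nat \<Rightarrow> bool" where
  zero: "rec_eval Zero xs 0"
| succ: "rec_eval Succ [x] (Suc x)"
| proj: "i < length xs \<Longrightarrow> rec_eval (Proj i) xs (xs ! i)"
| comp: "list_all2 (\<lambda>g y. rec_eval g xs y) gs ys \<Longrightarrow> rec_eval f ys z
          \<Longrightarrow> rec_eval (Cn f gs) xs z"
| pr0: "rec_eval f xs y \<Longrightarrow> rec_eval (Pr f g) (0 # xs) y"
| prS: "rec_eval (Pr f g) (n # xs) y \<Longrightarrow> rec_eval g (n # y # xs) z
          \<Longrightarrow> rec_eval (Pr f g) (Suc n # xs) z"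
| mu: "rec_eval f (n # xs) 0 \<Longrightarrow> (\<forall>m<n. \<exists>y. rec_eval f (m # xs) y \<and> 0 < y)
          \<Longrightarrow> rec_eval (Mn f) xs n"

text \<open>Variables X_1, X_2, ... are Var 0, Var 1, ...; connectives are numbered 0..k-1,
  a language is given by the list of arities of its connectives.\<close>
datatype form = Var nat | App nat "form list"

type_synonym lang = "nat list"

fun wf_form :: "lang \<Rightarrow> form \<Rightarrow> bool" where
  "wf_form ar (Var x) = True"
| "wf_form ar (App c args) =
     (c < length ar \<and> length args = ar ! c \<and> list_all (wf_form ar) args)"

fun subst :: "(nat \<Rightarrow> form) \<Rightarrow> form \<Rightarrow> form" where
  "subst \<sigma> (Var x) = \<sigma> x"
| "subst \<sigma> (App c args) = App c (map (subst \<sigma>) args)"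

text \<open>A calculus: finite list of axioms and finite list of rules (premises, conclusion).\<close>
type_synonym calculus = "form list \<times> (form list \<times> form) list"

definition wf_calc :: "lang \<Rightarrow> calculus \<Rightarrow> bool" where
  "wf_calc ar C = (list_all (wf_form ar) (fst C) \<and>
     (\<forall>(ps, c) \<in> set (snd C). list_all (wf_form ar) ps \<and> wf_form ar c))"

text \<open>A finite-valued logic: truth values {0..<n}, a list of designated values and,
  for each connective, its truth table: the value at argument tuple vs is at
  position tuple_index n vs (base-n reading of vs).\<close>
type_synonym logic = "nat \<times> nat list \<times> nat list list"

definition nvals :: "logic \<Rightarrow> nat" where "nvals M = fst M"
definition designated :: "logic \<Rightarrow> nat set" where "designated M = set (fst (snd M))"
definition tables :: "logic \<Rightarrow> nat list list" where "tables M = snd (snd M)"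

definition tuple_index :: "nat \<Rightarrow> nat list \<Rightarrow> nat" where
  "tuple_index n vs = foldl (\<lambda>acc v. acc * n + v) 0 vs"

definition truth_fun :: "logic \<Rightarrow> nat \<Rightarrow> nat list \<Rightarrow> nat" where
  "truth_fun M c vs = tables M ! c ! tuple_index (nvals M) vs"

definition wf_logic :: "lang \<Rightarrow> logic \<Rightarrow> bool" where
  "wf_logic ar M = (designated M \<subseteq> {0..<nvals M} \<and> length (tables M) = length ar \<and>
     (\<forall>c < length ar. length (tables M ! c) = nvals M ^ (ar ! c) \<and>
        (\<forall>v \<in> set (tables M ! c). v < nvals M)))"

fun val :: "logic \<Rightarrow> (nat \<Rightarrow> nat) \<Rightarrow> form \<Rightarrow> nat" where
  "val M v (Var x) = v x"
| "val M v (App c args) = truth_fun M c (map (val M v) args)"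

definition tautology :: "logic \<Rightarrow> form \<Rightarrow> bool" where
  "tautology M A = (\<forall>v. (\<forall>x. v x < nvals M) \<longrightarrow> val M v A \<in> designated M)"

definition t_sound :: "lang \<Rightarrow> calculus \<Rightarrow> logic \<Rightarrow> bool" where
  "t_sound ar C M =
    ((\<forall>A \<in> set (fst C). tautology M A) \<and>
     (\<forall>(ps, c) \<in> set (snd C). \<forall>\<sigma>. (\<forall>x. wf_form ar (\<sigma> x)) \<longrightarrow>
        (\<forall>A \<in> set ps. tautology M (subst \<sigma> A)) \<longrightarrow> tautology M (subst \<sigma> c)))"

fun form_code :: "form \<Rightarrow> nat" where
  "form_code (Var x) = prod_encode (0, x)"
| "form_code (App c args) = prod_encode (Suc c, list_encode (map form_code args))"

definition calc_code :: "calculus \<Rightarrow> nat" where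
  "calc_code C = prod_encode (list_encode (map form_code (fst C)),
     list_encode (map (\<lambda>(ps, c). prod_encode (list_encode (map form_code ps), form_code c)) (snd C)))"

definition logic_code :: "logic \<Rightarrow> nat" where
  "logic_code M = prod_encode (fst M, prod_encode (list_encode (fst (snd M)),
     list_encode (map list_encode (snd (snd M)))))"

definition input_code :: "lang \<Rightarrow> calculus \<Rightarrow> logic \<Rightarrow> nat" where
  "input_code ar C M = prod_encode (list_encode ar, prod_encode (calc_code C, logic_code M))"

end

theory Submission
  imports Defs "HOL-Library.FuncSet"
begin

text \<open>A rule fails to be t-sound only if some substitution instance has tautological premises
  and a refutable conclusion, and such a counterexample can be made small. Composing it with the
  renaming of each variable X_y to X_(v y), for a refuting valuation v, leaves only substituted
  formulas in the variables below n, the number of truth values. There are at most n ^ (n ^ n)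
  n-ary term functions, so the sets of term functions of formulas of height at most h stop growing
  before h = n ^ (n ^ n); hence each substituted formula may be replaced by one of height at most
  n ^ (n ^ n) with the same term function. Soundness therefore reduces to finitely many instances,
  whose codes are bounded in terms of the input, each of which is checked against the finitely many
  valuations. The resulting check is built from primitive recursion and bounded minimisation on
  codes, and so is computed by a Kleene program.\<close>

section \<open>Computable functions of an environment\<close>

inductive_cases rec_eval_MnE: "rec_eval (Mn f) xs n"

lemma rec_eval_functional: "rec_eval f xs y \<Longrightarrow> rec_eval f xs y' \<Longrightarrow> y = y'"
proof (induction arbitrary: y' rule: rec_eval.induct)
  case (zero xs)
  from zero.prems show ?case by (cases rule: rec_eval.cases) auto
next
  case (succ x)
  from succ.prems show ?case by (cases rule: rec_eval.cases) auto
next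
  case (proj i xs)
  from proj.prems show ?case by (cases rule: rec_eval.cases) auto
next
  case (comp xs gs ys f z)
  from comp.prems obtain ys' where ys': "list_all2 (\<lambda>g y. rec_eval g xs y) gs ys'" "rec_eval f ys' y'"
    by (cases rule: rec_eval.cases) auto
  have "ys = ys'"
    using comp.IH(1) ys'(1)
    by (induction gs ys arbitrary: ys' rule: list_all2_induct) (auto simp: list_all2_Cons1)
  then show ?case using comp.IH(2) ys'(2) by blast
next
  case (pr0 f xs y g)
  from pr0.prems show ?case by (cases rule: rec_eval.cases) (auto dest: pr0.IH)
next
  case (prS f g n xs y z)
  from prS.prems obtain y'' where "rec_eval (Pr f g) (n # xs) y''" "rec_eval g (n # y'' # xs) y'"
    by (cases rule: rec_eval.cases) auto
  then show ?case using prS.IH by blast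
next
  case (mu f n xs)
  from mu.prems have n': "rec_eval f (y' # xs) 0" "\<forall>m<y'. \<exists>y. rec_eval f (m # xs) y \<and> 0 < y"
    by (auto elim: rec_eval_MnE)
  show ?case
  proof (rule linorder_cases[of n y'])
    assume "n < y'"
    then obtain y where "rec_eval f (n # xs) y" "0 < y" using n'(2) by blast
    then show ?thesis using mu.IH(1) by blast
  next
    assume "y' < n"
    then show ?thesis using mu.IH(2) n'(1) by fastforce
  qed
qed

text \<open>Functions of an environment e :: nat \<Rightarrow> nat stand for functions of the argument list
  e 0, ..., e (k - 1).\<close>

definition computable :: "nat \<Rightarrow> ((nat \<Rightarrow> nat) \<Rightarrow> nat) \<Rightarrow> bool" where
  "computable k h \<longleftrightarrow> (\<exists>f. \<forall>e. rec_eval f (map e [0..<k]) (h e))"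

definition computable_pred :: "nat \<Rightarrow> ((nat \<Rightarrow> nat) \<Rightarrow> bool) \<Rightarrow> bool" where
  "computable_pred k P \<longleftrightarrow> computable k (\<lambda>e. if P e then 1 else 0)"

named_theorems computable_intros

lemma computable_env_cong:
  assumes "computable k h" "\<And>i. i < k \<Longrightarrow> e i = e' i"
  shows "h e = h e'"
proof -
  obtain f where f: "\<forall>e. rec_eval f (map e [0..<k]) (h e)"
    using assms(1) unfolding computable_def by blast
  have "map e [0..<k] = map e' [0..<k]"
    using assms(2) by simp
  then show ?thesis
    using f rec_eval_functional by metis
qed

lemma computable_cong: "computable k h \<Longrightarrow> (\<And>e. h e = h' e) \<Longrightarrow> computable k h'"
  by (metis ext)

lemma computable_zero: "computable k (\<lambda>e. 0)"
  unfolding computable_def by (auto intro: rec_eval.zero)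

lemma computable_var [computable_intros]: "i < k \<Longrightarrow> computable k (\<lambda>e. e i)"
  unfolding computable_def using rec_eval.proj[of i "map e [0..<k]" for e] by auto

lemma computable_Suc [computable_intros]: "computable k a \<Longrightarrow> computable k (\<lambda>e. Suc (a e))"
  unfolding computable_def
  by (auto intro: exI[of _ "Cn Succ [f]" for f] rec_eval.comp[where ys="[a e]" for e] rec_eval.succ)

lemma computable_const [computable_intros]: "computable k (\<lambda>e. c)"
  by (induction c) (auto intro: computable_zero computable_Suc)

lemma programs_for_computable:
  assumes "\<forall>h\<in>set hs. computable k h"
  shows "\<exists>fs. \<forall>e. list_all2 (\<lambda>f y. rec_eval f (map e [0..<k]) y) fs (map (\<lambda>h. h e) hs)"
  using assms
proof (induction hs)
  case (Cons h hs)
  then obtain fs where "\<forall>e. list_all2 (\<lambda>f y. rec_eval f (map e [0..<k]) y) fs (map (\<lambda>h. h e) hs)"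
    by auto
  moreover obtain f where "\<forall>e. rec_eval f (map e [0..<k]) (h e)"
    using Cons.prems unfolding computable_def by auto
  ultimately have "\<forall>e. list_all2 (\<lambda>f y. rec_eval f (map e [0..<k]) y) (f # fs) (map (\<lambda>h. h e) (h # hs))"
    by simp
  then show ?case by blast
qed simp

lemma computable_compose:
  assumes g: "computable (length hs) g" and hs: "\<forall>h\<in>set hs. computable k h"
  shows "computable k (\<lambda>e. g (\<lambda>i. (hs ! i) e))"
proof -
  obtain fs where fs: "\<forall>e. list_all2 (\<lambda>f y. rec_eval f (map e [0..<k]) y) fs (map (\<lambda>h. h e) hs)"
    using programs_for_computable[OF hs] by blast
  obtain f where f: "\<forall>e. rec_eval f (map e [0..<length hs]) (g e)"
    using g unfolding computable_def by blast
  have "rec_eval (Cn f fs) (map e [0..<k]) (g (\<lambda>i. (hs ! i) e))" for e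
  proof (rule rec_eval.comp)
    show "list_all2 (\<lambda>f y. rec_eval f (map e [0..<k]) y) fs (map (\<lambda>h. h e) hs)"
      using fs by blast
    have "map (\<lambda>h. h e) hs = map (\<lambda>i. (hs ! i) e) [0..<length hs]"
      by (rule nth_equalityI) auto
    then show "rec_eval f (map (\<lambda>h. h e) hs) (g (\<lambda>i. (hs ! i) e))"
      using f by simp
  qed
  then show ?thesis
    unfolding computable_def by blast
qed

lemma computable_compose1:
  "computable 1 (\<lambda>e. F (e 0)) \<Longrightarrow> computable k a \<Longrightarrow> computable k (\<lambda>e. F (a e))"
  using computable_compose[of "[a]" "\<lambda>e. F (e 0)"] by simp

lemma computable_compose2:
  "computable 2 (\<lambda>e. F (e 0) (e 1)) \<Longrightarrow> computable k a \<Longrightarrow> computable k b \<Longrightarrow>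
    computable k (\<lambda>e. F (a e) (b e))"
  using computable_compose[of "[a, b]" "\<lambda>e. F (e 0) (e 1)"] by (simp add: numeral_eq_Suc)

lemma computable_compose3:
  "computable 3 (\<lambda>e. F (e 0) (e 1) (e 2)) \<Longrightarrow> computable k a \<Longrightarrow> computable k b \<Longrightarrow>
    computable k c \<Longrightarrow> computable k (\<lambda>e. F (a e) (b e) (c e))"
  using computable_compose[of "[a, b, c]" "\<lambda>e. F (e 0) (e 1) (e 2)"] by (simp add: numeral_eq_Suc)

lemma computable_compose4:
  "computable 4 (\<lambda>e. F (e 0) (e 1) (e 2) (e 3)) \<Longrightarrow> computable k a \<Longrightarrow> computable k b \<Longrightarrow>
    computable k c \<Longrightarrow> computable k d \<Longrightarrow> computable k (\<lambda>e. F (a e) (b e) (c e) (d e))"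
  using computable_compose[of "[a, b, c, d]" "\<lambda>e. F (e 0) (e 1) (e 2) (e 3)"]
  by (simp add: numeral_eq_Suc)

lemma computable_reindex:
  assumes h: "computable m h" and p: "\<And>j. j < m \<Longrightarrow> p j < k"
  shows "computable k (\<lambda>e. h (\<lambda>i. e (p i)))"
proof -
  let ?hs = "map (\<lambda>j e. e (p j)) [0..<m]"
  have "\<forall>g\<in>set ?hs. computable k g"
    using p by (auto intro: computable_var)
  then have "computable k (\<lambda>e. h (\<lambda>i. (?hs ! i) e))"
    using computable_compose[of ?hs h k] h by simp
  moreover have "h (\<lambda>i. (?hs ! i) e) = h (\<lambda>i. e (p i))" for e
    by (rule computable_env_cong[OF h]) simp
  ultimately show ?thesis by simp
qed

lemma computable_case_nat:
  assumes h: "computable (Suc k) h" and x: "computable k x"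
  shows "computable k (\<lambda>e. h (case_nat (x e) e))"
proof -
  let ?hs = "x # map (\<lambda>i e. e i) [0..<k]"
  have "\<forall>g\<in>set ?hs. computable k g"
    using x by (auto intro: computable_var)
  then have "computable k (\<lambda>e. h (\<lambda>i. (?hs ! i) e))"
    using computable_compose[of ?hs h k] h by simp
  moreover have "h (\<lambda>i. (?hs ! i) e) = h (case_nat (x e) e)" for e
    by (rule computable_env_cong[OF h]) (auto simp: nth_Cons split: nat.split)
  ultimately show ?thesis by simp
qed

lemma computable_Let [computable_intros]:
  assumes "computable (Suc k) (\<lambda>e. F (\<lambda>i. e (Suc i)) (e 0))" "computable k x"
  shows "computable k (\<lambda>e. Let (x e) (F e))"
  using computable_case_nat[OF assms] by simp

lemma computable_rec_nat_Pr:
  assumes a: "computable k a" and s: "computable (Suc (Suc k)) (\<lambda>e. s (\<lambda>i. e (Suc (Suc i))) (e 0) (e 1))"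
  shows "computable (Suc k) (\<lambda>e. rec_nat (a (\<lambda>i. e (Suc i))) (s (\<lambda>i. e (Suc i))) (e 0))"
proof -
  obtain fa where fa: "\<forall>e. rec_eval fa (map e [0..<k]) (a e)"
    using a unfolding computable_def by blast
  obtain fs where fs: "\<forall>e. rec_eval fs (map e [0..<Suc (Suc k)]) (s (\<lambda>i. e (Suc (Suc i))) (e 0) (e 1))"
    using s unfolding computable_def by blast
  have "rec_eval (Pr fa fs) (m # map e [0..<k]) (rec_nat (a e) (s e) m)" for m e
  proof (induction m)
    case 0
    show ?case using fa by (simp add: rec_eval.pr0)
  next
    case (Suc m)
    have "rec_eval fs (m # rec_nat (a e) (s e) m # map e [0..<k]) (s e m (rec_nat (a e) (s e) m))"
      using fs[rule_format, of "case_nat m (case_nat (rec_nat (a e) (s e) m) e)"]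
      by (simp del: upt_Suc add: map_upt_Suc)
    then show ?case using rec_eval.prS[OF Suc] by simp
  qed
  then have "rec_eval (Pr fa fs) (map e [0..<Suc k])
      (rec_nat (a (\<lambda>i. e (Suc i))) (s (\<lambda>i. e (Suc i))) (e 0))" for e
    by (simp del: upt_Suc add: map_upt_Suc)
  then show ?thesis
    unfolding computable_def by blast
qed

text \<open>As for Pr, the step function sees the counter and the previous value in front of the
  environment.\<close>

lemma computable_rec_nat [computable_intros]:
  assumes "computable k a" "computable k c"
    "computable (Suc (Suc k)) (\<lambda>e. s (\<lambda>i. e (Suc (Suc i))) (e 0) (e 1))"
  shows "computable k (\<lambda>e. rec_nat (a e) (s e) (c e))"
  using computable_case_nat[OF computable_rec_nat_Pr[OF assms(1,3)] assms(2)] by simp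

lemma computable_add [computable_intros]:
  assumes "computable k a" "computable k b"
  shows "computable k (\<lambda>e. a e + b e)"
proof (rule computable_compose2[OF _ assms])
  have "computable 2 (\<lambda>e. rec_nat (e 0) (\<lambda>_ y. Suc y) (e 1))"
    by (intro computable_intros) simp_all
  moreover have "rec_nat x (\<lambda>_ y. Suc y) n = x + n" for x n :: nat
    by (induction n) simp_all
  ultimately show "computable 2 (\<lambda>e. e 0 + e 1)" by simp
qed

lemma computable_diff [computable_intros]:
  assumes "computable k a" "computable k b"
  shows "computable k (\<lambda>e. a e - b e)"
proof (rule computable_compose2[OF _ assms])
  have "computable 2 (\<lambda>e. rec_nat (e 0) (\<lambda>_ y. rec_nat 0 (\<lambda>m _. m) y) (e 1))"
    by (intro computable_intros) simp_all
  moreover have "rec_nat 0 (\<lambda>m _. m) y = y - 1" for y :: nat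
    by (cases y) simp_all
  moreover have "rec_nat x (\<lambda>_ y. y - 1) n = x - n" for x n :: nat
    by (induction n) simp_all
  ultimately show "computable 2 (\<lambda>e. e 0 - e 1)" by simp
qed

lemma computable_mult [computable_intros]:
  assumes "computable k a" "computable k b"
  shows "computable k (\<lambda>e. a e * b e)"
proof (rule computable_compose2[OF _ assms])
  have "computable 2 (\<lambda>e. rec_nat 0 (\<lambda>_ y. y + e 0) (e 1))"
    by (intro computable_intros) simp_all
  moreover have "rec_nat 0 (\<lambda>_ y. y + x) n = x * n" for x n :: nat
    by (induction n) simp_all
  ultimately show "computable 2 (\<lambda>e. e 0 * e 1)" by simp
qed

lemma computable_power [computable_intros]:
  assumes "computable k a" "computable k b"
  shows "computable k (\<lambda>e. a e ^ b e)"
proof (rule computable_compose2[OF _ assms])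
  have "computable 2 (\<lambda>e. rec_nat 1 (\<lambda>_ y. y * e 0) (e 1))"
    by (intro computable_intros) simp_all
  moreover have "rec_nat 1 (\<lambda>_ y. y * x) n = x ^ n" for x n :: nat
    by (induction n) simp_all
  ultimately show "computable 2 (\<lambda>e. e 0 ^ e 1)" by simp
qed

lemma computable_If [computable_intros]:
  assumes "computable_pred k P" "computable k a" "computable k b"
  shows "computable k (\<lambda>e. if P e then a e else b e)"
proof -
  have "computable k (\<lambda>e. (if P e then 1 else 0) * a e + (1 - (if P e then 1 else 0)) * b e)"
    using assms(1) unfolding computable_pred_def
    by (intro computable_add computable_mult computable_diff computable_const assms(2,3))
  then show ?thesis by (rule computable_cong) simp
qed

lemma computable_pred_eq [computable_intros]:
  assumes "computable k a" "computable k b"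
  shows "computable_pred k (\<lambda>e. a e = b e)"
proof -
  have "computable k (\<lambda>e. 1 - ((a e - b e) + (b e - a e)))"
    using assms by (intro computable_intros)
  then show ?thesis unfolding computable_pred_def by (rule computable_cong) auto
qed

lemma computable_pred_less [computable_intros]:
  assumes "computable k a" "computable k b"
  shows "computable_pred k (\<lambda>e. a e < b e)"
proof -
  have "computable k (\<lambda>e. 1 - (1 - (b e - a e)))"
    using assms by (intro computable_intros)
  then show ?thesis unfolding computable_pred_def by (rule computable_cong) auto
qed

lemma computable_pred_le [computable_intros]:
  assumes "computable k a" "computable k b"
  shows "computable_pred k (\<lambda>e. a e \<le> b e)"
proof -
  have "computable k (\<lambda>e. 1 - (a e - b e))"
    using assms by (intro computable_intros)
  then show ?thesis unfolding computable_pred_def by (rule computable_cong) auto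
qed

lemma computable_max [computable_intros]:
  "computable k a \<Longrightarrow> computable k b \<Longrightarrow> computable k (\<lambda>e. max (a e) (b e))"
  unfolding max_def by (intro computable_intros)

lemma computable_pred_not [computable_intros]:
  assumes "computable_pred k P"
  shows "computable_pred k (\<lambda>e. \<not> P e)"
proof -
  have "computable k (\<lambda>e. 1 - (if P e then 1 else 0))"
    using assms unfolding computable_pred_def by (intro computable_diff computable_const)
  then show ?thesis unfolding computable_pred_def by (rule computable_cong) auto
qed

lemma computable_pred_conj [computable_intros]:
  assumes "computable_pred k P" "computable_pred k Q"
  shows "computable_pred k (\<lambda>e. P e \<and> Q e)"
proof -
  have "computable k (\<lambda>e. (if P e then 1 else 0) * (if Q e then 1 else 0))"
    using assms unfolding computable_pred_def by (rule computable_mult)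
  then show ?thesis unfolding computable_pred_def by (rule computable_cong) auto
qed

lemma computable_pred_disj [computable_intros]:
  "computable_pred k P \<Longrightarrow> computable_pred k Q \<Longrightarrow> computable_pred k (\<lambda>e. P e \<or> Q e)"
  using computable_pred_not[of k "\<lambda>e. \<not> P e \<and> \<not> Q e"] by (simp add: computable_pred_conj computable_pred_not)

lemma computable_pred_imp [computable_intros]:
  "computable_pred k P \<Longrightarrow> computable_pred k Q \<Longrightarrow> computable_pred k (\<lambda>e. P e \<longrightarrow> Q e)"
  using computable_pred_disj[of k "\<lambda>e. \<not> P e" Q] by (simp add: computable_pred_not)

lemma computable_shift2:
  "computable k a \<Longrightarrow> computable (Suc (Suc k)) (\<lambda>e. a (\<lambda>i. e (Suc (Suc i))))"
  using computable_reindex[of k a "\<lambda>i. Suc (Suc i)"] by simp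

lemma computable_shift_param:
  assumes "computable (Suc k) (\<lambda>e. F (\<lambda>i. e (Suc i)) (e 0))"
  shows "computable (Suc (Suc k)) (\<lambda>e. F (\<lambda>i. e (Suc (Suc i))) (e 0))"
proof -
  have "computable (Suc (Suc k))
      (\<lambda>e. (\<lambda>e. F (\<lambda>i. e (Suc i)) (e 0)) (\<lambda>i. e (if i = 0 then 0 else Suc i)))"
    using assms by (rule computable_reindex) simp
  then show ?thesis by simp
qed

lemma computable_pred_shift_param:
  "computable_pred (Suc k) (\<lambda>e. P (\<lambda>i. e (Suc i)) (e 0)) \<Longrightarrow>
    computable_pred (Suc (Suc k)) (\<lambda>e. P (\<lambda>i. e (Suc (Suc i))) (e 0))"
  unfolding computable_pred_def
  by (rule computable_shift_param[where F="\<lambda>e x. if P e x then 1 else 0"])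

lemma computable_pred_ball [computable_intros]:
  assumes "computable k a" "computable_pred (Suc k) (\<lambda>e. P (\<lambda>i. e (Suc i)) (e 0))"
  shows "computable_pred k (\<lambda>e. \<forall>i<a e. P e i)"
proof -
  have "computable k (\<lambda>e. rec_nat 1 (\<lambda>i acc. if P e i then acc else 0) (a e))"
    by (intro computable_intros computable_pred_shift_param assms) simp_all
  moreover have "rec_nat x (\<lambda>i acc. if Q i then acc else 0) n = (if \<forall>i<n. Q i then x else 0)" for x Q n
    by (induction n) (auto simp: less_Suc_eq)
  ultimately show ?thesis unfolding computable_pred_def by (rule computable_cong)
qed

lemma computable_pred_bex [computable_intros]:
  assumes "computable k a" "computable_pred (Suc k) (\<lambda>e. P (\<lambda>i. e (Suc i)) (e 0))"
  shows "computable_pred k (\<lambda>e. \<exists>i<a e. P e i)"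
  using computable_pred_not[OF computable_pred_ball[OF assms(1) computable_pred_not[OF assms(2)]]]
  by simp

definition bounded_least :: "nat \<Rightarrow> (nat \<Rightarrow> bool) \<Rightarrow> nat" where
  "bounded_least n P = (if \<exists>i<n. P i then LEAST i. P i else n)"

lemma bounded_least_eqI:
  assumes "i < n" "P i" "\<And>j. j < i \<Longrightarrow> \<not> P j"
  shows "bounded_least n P = i"
proof -
  have "(LEAST i. P i) = i"
    by (metis Least_equality assms(2,3) not_less)
  then show ?thesis using assms(1,2) unfolding bounded_least_def by auto
qed

lemma bounded_least_Suc:
  "bounded_least (Suc n) P =
    (if bounded_least n P < n then bounded_least n P else if P n then n else Suc n)"
proof (cases "\<exists>i<n. P i")
  case True
  then have "(LEAST i. P i) < n" by (meson LeastI_ex Least_le le_less_trans)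
  then show ?thesis using True by (auto simp: bounded_least_def less_Suc_eq)
next
  case False
  then have "P n \<Longrightarrow> (LEAST i. P i) = n" by (metis Least_equality not_less)
  then show ?thesis using False by (auto simp: bounded_least_def less_Suc_eq)
qed

lemma computable_bounded_least [computable_intros]:
  assumes "computable k a" "computable_pred (Suc k) (\<lambda>e. P (\<lambda>i. e (Suc i)) (e 0))"
  shows "computable k (\<lambda>e. bounded_least (a e) (P e))"
proof -
  have "computable k (\<lambda>e. rec_nat 0 (\<lambda>i acc. if acc < i then acc else if P e i then i else Suc i) (a e))"
    by (intro computable_intros computable_pred_shift_param assms) simp_all
  moreover have "rec_nat 0 (\<lambda>i acc. if acc < i then acc else if Q i then i else Suc i) n =
      bounded_least n Q" for Q n
    by (induction n) (simp_all add: bounded_least_Suc, simp add: bounded_least_def)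
  ultimately show ?thesis by simp
qed

lemma div_eq_bounded_least: "b > 0 \<Longrightarrow> a div b = bounded_least (Suc a) (\<lambda>q. a < Suc q * b)"
proof (rule sym, rule bounded_least_eqI)
  assume b: "b > 0"
  show "a div b < Suc a" using b by (simp add: le_imp_less_Suc div_le_dividend)
  show "a < Suc (a div b) * b" using b
    by (metis add.commute div_mult_mod_eq mod_less_divisor mult_Suc nat_add_left_cancel_less)
  fix j assume "j < a div b"
  then have "Suc j * b \<le> a div b * b" by (intro mult_le_mono1) simp
  also have "\<dots> \<le> a" by (rule div_times_less_eq_dividend)
  finally show "\<not> a < Suc j * b" by simp
qed

lemma computable_div [computable_intros]:
  assumes "computable k a" "computable k b"
  shows "computable k (\<lambda>e. a e div b e)"
proof (rule computable_compose2[OF _ assms])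
  have "computable 2 (\<lambda>e. if e 1 = 0 then 0 else bounded_least (Suc (e 0)) (\<lambda>q. e 0 < Suc q * e 1))"
    by (intro computable_intros) simp_all
  then show "computable 2 (\<lambda>e. e 0 div e 1)"
    by (rule computable_cong) (simp add: div_eq_bounded_least)
qed

lemma computable_mod [computable_intros]:
  assumes "computable k a" "computable k b"
  shows "computable k (\<lambda>e. a e mod b e)"
proof -
  have "computable k (\<lambda>e. a e - a e div b e * b e)"
    using assms by (intro computable_intros)
  then show ?thesis by (simp add: minus_div_mult_eq_mod)
qed

lemma computable_prod_encode [computable_intros]:
  assumes "computable k a" "computable k b"
  shows "computable k (\<lambda>e. prod_encode (a e, b e))"
proof (rule computable_compose2[OF _ assms])
  have "computable 2 (\<lambda>e. (e 0 + e 1) * Suc (e 0 + e 1) div 2 + e 0)"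
    by (intro computable_intros) simp_all
  then show "computable 2 (\<lambda>e. prod_encode (e 0, e 1))"
    by (simp add: prod_encode_def triangle_def)
qed

lemma prod_decode_eq_bounded_least:
  "fst (prod_decode m) = bounded_least (Suc m) (\<lambda>a. \<exists>b<Suc m. prod_encode (a, b) = m)"
  "snd (prod_decode m) = bounded_least (Suc m) (\<lambda>b. \<exists>a<Suc m. prod_encode (a, b) = m)"
proof -
  obtain a b where ab: "prod_decode m = (a, b)" by fastforce
  then have m: "prod_encode (a, b) = m" by (metis prod_decode_inverse)
  have "a \<le> m" "b \<le> m" using le_prod_encode_1[of a b] le_prod_encode_2[of b a] m by simp_all
  then have "bounded_least (Suc m) (\<lambda>a. \<exists>b<Suc m. prod_encode (a, b) = m) = a"
    and "bounded_least (Suc m) (\<lambda>b. \<exists>a<Suc m. prod_encode (a, b) = m) = b"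
    using m by (auto intro!: bounded_least_eqI)
  then show "fst (prod_decode m) = bounded_least (Suc m) (\<lambda>a. \<exists>b<Suc m. prod_encode (a, b) = m)"
    and "snd (prod_decode m) = bounded_least (Suc m) (\<lambda>b. \<exists>a<Suc m. prod_encode (a, b) = m)"
    using ab by simp_all
qed

lemma computable_fst_prod_decode [computable_intros]:
  "computable k a \<Longrightarrow> computable k (\<lambda>e. fst (prod_decode (a e)))"
proof (rule computable_compose1[where F="\<lambda>m. fst (prod_decode m)"])
  have "computable 1 (\<lambda>e. bounded_least (Suc (e 0)) (\<lambda>a. \<exists>b<Suc (e 0). prod_encode (a, b) = e 0))"
    by (intro computable_intros) simp_all
  then show "computable 1 (\<lambda>e. fst (prod_decode (e 0)))"
    by (simp only: prod_decode_eq_bounded_least)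
qed

lemma computable_snd_prod_decode [computable_intros]:
  "computable k a \<Longrightarrow> computable k (\<lambda>e. snd (prod_decode (a e)))"
proof (rule computable_compose1[where F="\<lambda>m. snd (prod_decode m)"])
  have "computable 1 (\<lambda>e. bounded_least (Suc (e 0)) (\<lambda>b. \<exists>a<Suc (e 0). prod_encode (a, b) = e 0))"
    by (intro computable_intros) simp_all
  then show "computable 1 (\<lambda>e. snd (prod_decode (e 0)))"
    by (simp only: prod_decode_eq_bounded_least)
qed

text \<open>Recall list_encode (x # xs) = Suc (prod_encode (x, list_encode xs)).\<close>

definition code_tl :: "nat \<Rightarrow> nat" where
  "code_tl l = snd (prod_decode (l - 1))"

definition code_nth :: "nat \<Rightarrow> nat \<Rightarrow> nat" where
  "code_nth l i = fst (prod_decode ((code_tl ^^ i) l - 1))"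

definition code_length :: "nat \<Rightarrow> nat" where
  "code_length l = bounded_least (Suc l) (\<lambda>i. (code_tl ^^ i) l = 0)"

lemma computable_code_tl_funpow [computable_intros]:
  assumes "computable k a" "computable k b"
  shows "computable k (\<lambda>e. (code_tl ^^ b e) (a e))"
proof -
  have "computable k (\<lambda>e. rec_nat (a e) (\<lambda>_ y. code_tl y) (b e))"
    unfolding code_tl_def using assms by (intro computable_intros) simp_all
  moreover have "rec_nat l (\<lambda>_ y. code_tl y) n = (code_tl ^^ n) l" for l n
    by (induction n) simp_all
  ultimately show ?thesis by simp
qed

lemma computable_code_nth [computable_intros]:
  "computable k a \<Longrightarrow> computable k b \<Longrightarrow> computable k (\<lambda>e. code_nth (a e) (b e))"
  unfolding code_nth_def by (intro computable_intros)

lemma computable_code_length [computable_intros]: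
  "computable k a \<Longrightarrow> computable k (\<lambda>e. code_length (a e))"
  by (rule computable_compose1[where F=code_length])
    (unfold code_length_def, intro computable_intros; simp)

lemma code_tl_list_encode: "code_tl (list_encode xs) = list_encode (tl xs)"
proof (cases xs)
  case Nil
  then show ?thesis by (simp add: code_tl_def prod_decode_def prod_decode_aux.simps)
qed (simp add: code_tl_def)

lemma code_tl_funpow_list_encode: "(code_tl ^^ i) (list_encode xs) = list_encode (drop i xs)"
  by (induction i arbitrary: xs) (simp_all add: code_tl_list_encode tl_drop drop_Suc)

lemma code_nth_list_encode: "i < length xs \<Longrightarrow> code_nth (list_encode xs) i = xs ! i"
  by (simp add: code_nth_def code_tl_funpow_list_encode Cons_nth_drop_Suc[symmetric])

lemma length_le_list_encode: "length xs \<le> list_encode xs"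
proof (induction xs)
  case (Cons x xs)
  then show ?case using le_prod_encode_2[of "list_encode xs" x] by simp
qed simp

lemma mem_less_list_encode: "y \<in> set xs \<Longrightarrow> y < list_encode xs"
proof (induction xs)
  case (Cons x xs)
  then show ?case
    using le_prod_encode_1[of x "list_encode xs"] le_prod_encode_2[of "list_encode xs" x] by auto
qed simp

lemma code_length_list_encode: "code_length (list_encode xs) = length xs"
  unfolding code_length_def
proof (rule bounded_least_eqI)
  show "length xs < Suc (list_encode xs)"
    using length_le_list_encode[of xs] by simp
  show "(code_tl ^^ length xs) (list_encode xs) = 0"
    by (simp add: code_tl_funpow_list_encode)
  show "(code_tl ^^ j) (list_encode xs) \<noteq> 0" if "j < length xs" for j
    using that by (simp add: code_tl_funpow_list_encode Cons_nth_drop_Suc[symmetric])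
qed

lemma ball_code_nth_list_encode:
  "(\<forall>i<code_length (list_encode (map f xs)). P (code_nth (list_encode (map f xs)) i)) \<longleftrightarrow>
    (\<forall>x\<in>set xs. P (f x))"
  by (auto simp: code_length_list_encode code_nth_list_encode all_set_conv_all_nth)

section \<open>Course-of-values recursion\<close>

text \<open>cov_history G m codes the list of the values at m - 1, ..., 1, 0.\<close>

fun cov_history :: "(nat \<Rightarrow> nat \<Rightarrow> nat) \<Rightarrow> nat \<Rightarrow> nat" where
  "cov_history G 0 = 0"
| "cov_history G (Suc m) = Suc (prod_encode (G m (cov_history G m), cov_history G m))"

definition cov_rec :: "(nat \<Rightarrow> nat \<Rightarrow> nat) \<Rightarrow> nat \<Rightarrow> nat" where
  "cov_rec G m = G m (cov_history G m)"

lemma cov_history_list_encode: "cov_history G m = list_encode (rev (map (cov_rec G) [0..<m]))"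
  by (induction m) (simp_all add: cov_rec_def)

lemma code_nth_cov_history: "j < m \<Longrightarrow> code_nth (cov_history G m) (m - Suc j) = cov_rec G j"
  by (simp add: cov_history_list_encode code_nth_list_encode rev_nth)

lemma computable_cov_rec [computable_intros]:
  assumes G: "computable (Suc (Suc k)) (\<lambda>e. G (\<lambda>i. e (Suc (Suc i))) (e 0) (e 1))"
    and a: "computable k a"
  shows "computable k (\<lambda>e. cov_rec (G e) (a e))"
proof -
  have G3: "computable (Suc (Suc (Suc k))) (\<lambda>e. G (\<lambda>i. e (Suc (Suc (Suc i)))) (e 0) (e 1))"
    using computable_reindex[OF G, of "\<lambda>i. if i < 2 then i else Suc i"] by (simp add: numeral_eq_Suc)
  have "computable (Suc k) (\<lambda>e. rec_nat 0 (\<lambda>m h. Suc (prod_encode (G (\<lambda>i. e (Suc i)) m h, h))) (e 0))"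
    using G3 by (intro computable_intros) simp_all
  moreover have "computable (Suc (Suc k)) (\<lambda>e. G (\<lambda>i. e (Suc (Suc i))) (e (Suc 0)) (e 0))"
    using computable_reindex[OF G, of "\<lambda>i. if i = 0 then 1 else if i = 1 then 0 else i"] by simp
  ultimately have "computable (Suc k)
      (\<lambda>e. G (\<lambda>i. e (Suc i)) (e 0) (rec_nat 0 (\<lambda>m h. Suc (prod_encode (G (\<lambda>i. e (Suc i)) m h, h))) (e 0)))"
    using computable_case_nat by fastforce
  from computable_case_nat[OF this a]
  have "computable k (\<lambda>e. G e (a e) (rec_nat 0 (\<lambda>m h. Suc (prod_encode (G e m h, h))) (a e)))"
    by simp
  moreover have "rec_nat 0 (\<lambda>m h. Suc (prod_encode (H m h, h))) m = cov_history H m" for H m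
    by (induction m) simp_all
  ultimately show ?thesis by (simp add: cov_rec_def)
qed

fun form_vars :: "form \<Rightarrow> nat set" where
  "form_vars (Var x) = {x}"
| "form_vars (App c args) = (\<Union>a\<in>set args. form_vars a)"

fun form_height :: "form \<Rightarrow> nat" where
  "form_height (Var x) = 0"
| "form_height (App c args) = Suc (Max (insert 0 (form_height ` set args)))"

definition wf_form_below :: "lang \<Rightarrow> nat \<Rightarrow> form \<Rightarrow> bool" where
  "wf_form_below ar N t \<longleftrightarrow> wf_form ar t \<and> form_vars t \<subseteq> {..<N}"

lemma wf_form_below_App:
  "wf_form_below ar N (App c args) \<longleftrightarrow>
    c < length ar \<and> length args = ar ! c \<and> (\<forall>a\<in>set args. wf_form_below ar N a)"
  unfolding wf_form_below_def by (auto simp: list_all_iff)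

lemma form_vars_subst: "form_vars (subst \<sigma> t) = (\<Union>x\<in>form_vars t. form_vars (\<sigma> x))"
  by (induction t) auto

lemma subst_subst: "subst \<tau> (subst \<sigma> t) = subst (\<lambda>x. subst \<tau> (\<sigma> x)) t"
  by (induction t) auto

lemma subst_cong: "(\<And>x. x \<in> form_vars t \<Longrightarrow> \<sigma> x = \<tau> x) \<Longrightarrow> subst \<sigma> t = subst \<tau> t"
  by (induction t) auto

lemma wf_form_subst:
  "wf_form ar t \<Longrightarrow> (\<And>x. x \<in> form_vars t \<Longrightarrow> wf_form ar (\<sigma> x)) \<Longrightarrow> wf_form ar (subst \<sigma> t)"
  by (induction t) (auto simp: list_all_iff)

lemma val_cong: "(\<And>x. x \<in> form_vars t \<Longrightarrow> v x = v' x) \<Longrightarrow> val M v t = val M v' t"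
proof (induction t)
  case (App c args)
  then have "map (val M v) args = map (val M v') args" by auto
  then show ?case by (simp only: val.simps)
qed simp

lemma val_subst: "val M v (subst \<sigma> t) = val M (\<lambda>x. val M v (\<sigma> x)) t"
proof (induction t)
  case (App c args)
  then have "map (val M v \<circ> subst \<sigma>) args = map (val M (\<lambda>x. val M v (\<sigma> x))) args" by auto
  then show ?case by (simp only: val.simps subst.simps map_map)
qed simp

lemma tuple_index_less:
  assumes "\<forall>v\<in>set vs. v < n"
  shows "tuple_index n vs < n ^ length vs"
proof -
  have "foldl (\<lambda>acc v. acc * n + v) a vs < Suc a * n ^ length vs" for a
    using assms
  proof (induction vs arbitrary: a)
    case (Cons v vs)
    then have "foldl (\<lambda>acc v. acc * n + v) (a * n + v) vs < Suc (a * n + v) * n ^ length vs"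
      by simp
    also have "\<dots> \<le> Suc a * n * n ^ length vs"
      using Cons.prems by (intro mult_le_mono1) simp
    finally show ?case by (simp add: algebra_simps)
  qed simp
  from this[of 0] show ?thesis by (simp add: tuple_index_def)
qed

lemma val_less_nvals:
  assumes M: "wf_logic ar M" and "wf_form ar t" "\<And>x. x \<in> form_vars t \<Longrightarrow> v x < nvals M"
  shows "val M v t < nvals M"
  using assms(2,3)
proof (induction t)
  case (App c args)
  have c: "c < length ar" "length args = ar ! c" and args: "\<forall>a\<in>set args. wf_form ar a"
    using App.prems(1) by (simp_all add: list_all_iff)
  have table: "length (tables M ! c) = nvals M ^ length args" "\<forall>y\<in>set (tables M ! c). y < nvals M"
    using M c unfolding wf_logic_def by simp_all
  have "\<forall>y\<in>set (map (val M v) args). y < nvals M"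
    using App.IH App.prems(2) args by auto
  then have "tuple_index (nvals M) (map (val M v) args) < length (tables M ! c)"
    using tuple_index_less table(1) by fastforce
  then show ?case
    using table(2) by (simp add: truth_fun_def)
qed simp

lemma tautology_subst:
  assumes M: "wf_logic ar M" and \<tau>: "\<And>x. wf_form ar (\<tau> x)" and A: "tautology M A"
  shows "tautology M (subst \<tau> A)"
  unfolding tautology_def
proof (intro allI impI)
  fix v :: "nat \<Rightarrow> nat"
  assume "\<forall>x. v x < nvals M"
  then have "\<forall>x. val M v (\<tau> x) < nvals M"
    using val_less_nvals[OF M \<tau>] by blast
  then show "val M v (subst \<tau> A) \<in> designated M"
    using A unfolding tautology_def val_subst by simp
qed

lemma tautology_subst_cong:
  assumes "\<And>v x. \<forall>y. v y < nvals M \<Longrightarrow> val M v (\<sigma> x) = val M v (\<tau> x)"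
  shows "tautology M (subst \<sigma> A) \<longleftrightarrow> tautology M (subst \<tau> A)"
proof -
  have "(\<lambda>x. val M v (\<sigma> x)) = (\<lambda>x. val M v (\<tau> x))" if "\<forall>y. v y < nvals M" for v
    using assms that by blast
  then show ?thesis unfolding tautology_def val_subst by auto
qed

text \<open>A valuation of the variables below N in {0..<n} is coded by the number whose base-n
  digits are its values.\<close>

definition digit :: "nat \<Rightarrow> nat \<Rightarrow> nat \<Rightarrow> nat" where
  "digit n w x = w div n ^ x mod n"

definition from_digits :: "nat \<Rightarrow> (nat \<Rightarrow> nat) \<Rightarrow> nat \<Rightarrow> nat" where
  "from_digits n f N = (\<Sum>x<N. f x * n ^ x)"

lemma computable_digit [computable_intros]:
  "computable k a \<Longrightarrow> computable k b \<Longrightarrow> computable k c \<Longrightarrow> computable k (\<lambda>e. digit (a e) (b e) (c e))"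
  unfolding digit_def by (intro computable_intros)

lemma computable_from_digits [computable_intros]:
  assumes n: "computable k n" and N: "computable k N"
    and f: "computable (Suc k) (\<lambda>e. f (\<lambda>i. e (Suc i)) (e 0))"
  shows "computable k (\<lambda>e. from_digits (n e) (f e) (N e))"
proof -
  have "computable (Suc (Suc k)) (\<lambda>e. f (\<lambda>i. e (Suc (Suc i))) (e 0))"
    using f by (rule computable_shift_param)
  moreover have "computable (Suc (Suc k)) (\<lambda>e. n (\<lambda>i. e (Suc (Suc i))))"
    using n by (rule computable_shift2)
  ultimately have "computable k (\<lambda>e. rec_nat 0 (\<lambda>j acc. acc + f e j * n e ^ j) (N e))"
    by (intro computable_rec_nat computable_const N computable_add computable_mult computable_power
        computable_var) simp_all
  moreover have "rec_nat 0 (\<lambda>j acc. acc + g j * m ^ j) L = from_digits m g L" for g m L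
    by (induction L) (simp_all add: from_digits_def)
  ultimately show ?thesis by simp
qed

lemma digit_less: "n > 0 \<Longrightarrow> digit n w x < n"
  by (simp add: digit_def)

lemma from_digits_less: "(\<And>x. x < N \<Longrightarrow> f x < n) \<Longrightarrow> from_digits n f N < n ^ N"
proof (induction N)
  case (Suc N)
  have "from_digits n f (Suc N) = from_digits n f N + f N * n ^ N"
    by (simp add: from_digits_def)
  also have "\<dots> < (f N + 1) * n ^ N"
    using Suc by simp
  also have "\<dots> \<le> n * n ^ N"
    using Suc.prems[of N] by (intro mult_le_mono1) simp
  finally show ?case by simp
qed (simp add: from_digits_def)

lemma digit_from_digits:
  "(\<And>x. x < N \<Longrightarrow> f x < n) \<Longrightarrow> y < N \<Longrightarrow> digit n (from_digits n f N) y = f y"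
proof (induction N)
  case (Suc N)
  have n: "n > 0" using Suc.prems by fastforce
  have less: "from_digits n f N < n ^ N"
    using Suc.prems(1) by (intro from_digits_less) simp
  have step: "from_digits n f (Suc N) = from_digits n f N + f N * n ^ N"
    by (simp add: from_digits_def)
  show ?case
  proof (cases "y < N")
    case True
    then obtain d where d: "N = y + Suc d" by (metis add_Suc_right less_imp_Suc_add)
    have "from_digits n f (Suc N) = from_digits n f N + n ^ y * (n * (f N * n ^ d))"
      unfolding step by (simp add: d power_add algebra_simps)
    then have "from_digits n f (Suc N) div n ^ y = n * (f N * n ^ d) + from_digits n f N div n ^ y"
      using n by simp
    then show ?thesis using Suc True by (simp add: digit_def)
  next
    case False
    then have "y = N" using Suc.prems(2) by simp
    have "from_digits n f (Suc N) div n ^ N = f N"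
      unfolding step using n less by simp
    then show ?thesis using \<open>y = N\<close> Suc.prems(1)[of N] by (simp add: digit_def)
  qed
qed simp

lemma tautology_iff_digits:
  assumes "nvals M > 0" "form_vars A \<subseteq> {..<N}"
  shows "tautology M A \<longleftrightarrow> (\<forall>w<nvals M ^ N. val M (digit (nvals M) w) A \<in> designated M)"
proof
  assume "tautology M A"
  then show "\<forall>w<nvals M ^ N. val M (digit (nvals M) w) A \<in> designated M"
    using digit_less[OF assms(1)] unfolding tautology_def by blast
next
  assume digits: "\<forall>w<nvals M ^ N. val M (digit (nvals M) w) A \<in> designated M"
  show "tautology M A" unfolding tautology_def
  proof (intro allI impI)
    fix v :: "nat \<Rightarrow> nat"
    assume v: "\<forall>x. v x < nvals M"
    let ?w = "from_digits (nvals M) v N"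
    have "val M v A = val M (digit (nvals M) ?w) A"
      using assms(2) v by (intro val_cong) (auto simp: digit_from_digits)
    moreover have "?w < nvals M ^ N"
      using v by (intro from_digits_less) auto
    ultimately show "val M v A \<in> designated M"
      using digits by simp
  qed
qed

section \<open>Term functions and the height bound\<close>

text \<open>The n-ary term function of t, where n = nvals M, read on codes of valuations of
  X_0, ..., X_(n-1); restricting it to the codes below n ^ n leaves finitely many term functions.\<close>

definition term_fun :: "logic \<Rightarrow> form \<Rightarrow> nat \<Rightarrow> nat" where
  "term_fun M t = restrict (\<lambda>w. val M (digit (nvals M) w) t) {..<nvals M ^ nvals M}"

definition term_funs :: "lang \<Rightarrow> logic \<Rightarrow> nat \<Rightarrow> (nat \<Rightarrow> nat) set" where
  "term_funs ar M h = term_fun M ` {t. wf_form_below ar (nvals M) t \<and> form_height t \<le> h}"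

lemma term_fun_App_cong:
  assumes "map (term_fun M) args = map (term_fun M) args'"
  shows "term_fun M (App c args) = term_fun M (App c args')"
proof -
  have "map (val M (digit (nvals M) w)) args = map (val M (digit (nvals M) w)) args'"
    if w: "w < nvals M ^ nvals M" for w
  proof -
    have "map (\<lambda>a. term_fun M a w) args = map (\<lambda>a. term_fun M a w) args'"
      using arg_cong[OF assms, of "map (\<lambda>f. f w)"] by (simp add: comp_def)
    then show ?thesis using w by (simp add: term_fun_def)
  qed
  then show ?thesis
    unfolding term_fun_def by (intro restrict_ext) simp
qed

lemma term_funs_mono: "h \<le> h' \<Longrightarrow> term_funs ar M h \<subseteq> term_funs ar M h'"
  unfolding term_funs_def by auto

lemma term_fun_App_in_term_funs:
  assumes t: "wf_form_below ar (nvals M) (App c args)"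
    and args: "\<forall>a\<in>set args. term_fun M a \<in> term_funs ar M h"
  shows "term_fun M (App c args) \<in> term_funs ar M (Suc h)"
proof -
  have "\<forall>a\<in>set args. \<exists>a'. wf_form_below ar (nvals M) a' \<and> form_height a' \<le> h \<and> term_fun M a = term_fun M a'"
    using args unfolding term_funs_def by (auto simp: image_iff)
  then obtain r where r: "\<forall>a\<in>set args. wf_form_below ar (nvals M) (r a) \<and> form_height (r a) \<le> h \<and>
      term_fun M a = term_fun M (r a)"
    by (metis bchoice)
  have "wf_form_below ar (nvals M) (App c (map r args))"
    using t r by (simp add: wf_form_below_App)
  moreover have "form_height (App c (map r args)) \<le> Suc h"
    using r by (simp add:)
  moreover have "term_fun M (App c (map r args)) = term_fun M (App c args)"
    by (intro term_fun_App_cong) (use r in \<open>simp add: map_eq_conv\<close>)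
  ultimately show ?thesis
    unfolding term_funs_def by (metis (mono_tags, lifting) image_eqI mem_Collect_eq)
qed

lemma term_funs_Suc_Suc:
  assumes "term_funs ar M h = term_funs ar M (Suc h)"
  shows "term_funs ar M (Suc (Suc h)) = term_funs ar M (Suc h)"
proof
  show "term_funs ar M (Suc (Suc h)) \<subseteq> term_funs ar M (Suc h)"
  proof
    fix f
    assume "f \<in> term_funs ar M (Suc (Suc h))"
    then obtain t where t: "wf_form_below ar (nvals M) t" "form_height t \<le> Suc (Suc h)" "f = term_fun M t"
      unfolding term_funs_def by auto
    show "f \<in> term_funs ar M (Suc h)"
    proof (cases t)
      case (Var x)
      then show ?thesis using t unfolding term_funs_def by auto
    next
      case (App c args)
      have "\<forall>a\<in>set args. term_fun M a \<in> term_funs ar M (Suc h)"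
        using t App unfolding term_funs_def by (auto simp: wf_form_below_App)
      then show ?thesis
        using term_fun_App_in_term_funs t App assms by simp
    qed
  qed
qed (rule term_funs_mono, simp)

lemma term_funs_stable:
  assumes "term_funs ar M h = term_funs ar M (Suc h)"
  shows "term_funs ar M (h + m) = term_funs ar M h"
proof -
  have "term_funs ar M (h + m) = term_funs ar M (Suc (h + m))" for m
    using assms by (induction m) (simp_all add: term_funs_Suc_Suc)
  then show ?thesis by (induction m) simp_all
qed

lemma term_funs_subset_funcset:
  assumes "wf_logic ar M" "nvals M > 0"
  shows "term_funs ar M h \<subseteq> {..<nvals M ^ nvals M} \<rightarrow>\<^sub>E {..<nvals M}"
proof
  fix f
  assume "f \<in> term_funs ar M h"
  then obtain t where "wf_form_below ar (nvals M) t" "f = term_fun M t"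
    unfolding term_funs_def by blast
  then show "f \<in> {..<nvals M ^ nvals M} \<rightarrow>\<^sub>E {..<nvals M}"
    unfolding term_fun_def restrict_PiE_iff using assms
    by (auto simp: wf_form_below_def intro!: val_less_nvals digit_less)
qed

lemma term_funs_stable_below:
  assumes "wf_logic ar M" "nvals M > 0"
  shows "\<exists>h\<le>nvals M ^ (nvals M ^ nvals M). term_funs ar M h = term_funs ar M (Suc h)"
proof (rule ccontr)
  let ?n = "nvals M"
  let ?S = "{..<?n ^ ?n} \<rightarrow>\<^sub>E {..<?n}"
  assume "\<not> ?thesis"
  then have growing: "term_funs ar M h \<subset> term_funs ar M (Suc h)" if "h \<le> ?n ^ (?n ^ ?n)" for h
    using that term_funs_mono[of h "Suc h" ar M] by auto
  have "finite ?S" by (simp add: finite_PiE)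
  have "m \<le> card (term_funs ar M m)" if "m \<le> Suc (?n ^ (?n ^ ?n))" for m
    using that
  proof (induction m)
    case (Suc m)
    have "card (term_funs ar M m) < card (term_funs ar M (Suc m))"
      using growing[of m] Suc.prems \<open>finite ?S\<close> term_funs_subset_funcset[OF assms]
      by (meson Suc_le_mono finite_subset psubset_card_mono)
    then show ?case using Suc by simp
  qed simp
  also have "card (term_funs ar M (Suc (?n ^ (?n ^ ?n)))) \<le> card ?S"
    using \<open>finite ?S\<close> term_funs_subset_funcset[OF assms] by (rule card_mono)
  also have "card ?S = ?n ^ (?n ^ ?n)"
    by (simp add: card_PiE)
  finally show False by simp
qed

lemma low_height_form_with_same_term_fun:
  assumes "wf_logic ar M" "nvals M > 0" "wf_form_below ar (nvals M) t"
  shows "\<exists>t'. wf_form_below ar (nvals M) t' \<and> form_height t' \<le> nvals M ^ (nvals M ^ nvals M) \<and>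
    term_fun M t' = term_fun M t"
proof -
  obtain h where h: "h \<le> nvals M ^ (nvals M ^ nvals M)" "term_funs ar M h = term_funs ar M (Suc h)"
    using term_funs_stable_below[OF assms(1,2)] by blast
  have "term_fun M t \<in> term_funs ar M (h + form_height t)"
    unfolding term_funs_def using assms(3) by auto
  then have "term_fun M t \<in> term_funs ar M h"
    using term_funs_stable[OF h(2)] by simp
  then obtain t' where "wf_form_below ar (nvals M) t'" "form_height t' \<le> h" "term_fun M t' = term_fun M t"
    unfolding term_funs_def by auto
  then show ?thesis
    using h(1) by (intro exI[of _ t']) simp
qed

lemma val_eq_if_term_fun_eq:
  assumes "wf_form_below ar (nvals M) t" "wf_form_below ar (nvals M) t'" "term_fun M t = term_fun M t'"
    and v: "\<forall>y. v y < nvals M"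
  shows "val M v t = val M v t'"
proof -
  let ?n = "nvals M"
  let ?w = "from_digits ?n v ?n"
  have w: "?w < ?n ^ ?n"
    using v by (intro from_digits_less) auto
  have "val M v u = term_fun M u ?w" if "wf_form_below ar ?n u" for u
    using that v w unfolding term_fun_def wf_form_below_def
    by (auto intro!: val_cong simp: digit_from_digits)
  then show ?thesis using assms by simp
qed

section \<open>Small counterexamples to the soundness of a rule\<close>

definition sound_rule :: "lang \<Rightarrow> logic \<Rightarrow> form list \<Rightarrow> form \<Rightarrow> bool" where
  "sound_rule ar M ps c \<longleftrightarrow> (\<forall>\<sigma>. (\<forall>x. wf_form ar (\<sigma> x)) \<longrightarrow>
     (\<forall>A\<in>set ps. tautology M (subst \<sigma> A)) \<longrightarrow> tautology M (subst \<sigma> c))"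

lemma t_sound_iff_sound_rules:
  "t_sound ar C M \<longleftrightarrow> (\<forall>A\<in>set (fst C). tautology M A) \<and> (\<forall>(ps, c)\<in>set (snd C). sound_rule ar M ps c)"
  unfolding t_sound_def sound_rule_def ..

lemma counterexample_with_vars_below_nvals:
  assumes M: "wf_logic ar M" and \<sigma>: "\<forall>x. wf_form ar (\<sigma> x)"
    and ps: "\<forall>p\<in>set ps. tautology M (subst \<sigma> p)" and c: "\<not> tautology M (subst \<sigma> c)"
  shows "\<exists>\<sigma>'. (\<forall>x. wf_form_below ar (nvals M) (\<sigma>' x)) \<and>
    (\<forall>p\<in>set ps. tautology M (subst \<sigma>' p)) \<and> \<not> tautology M (subst \<sigma>' c)"
proof -
  let ?n = "nvals M"
  obtain v where v: "\<forall>x. v x < ?n" "val M v (subst \<sigma> c) \<notin> designated M"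
    using c unfolding tautology_def by blast
  let ?\<rho> = "\<lambda>y. Var (v y)"
  define \<sigma>' where "\<sigma>' = (\<lambda>x. subst ?\<rho> (\<sigma> x))"
  have "wf_form_below ar ?n (\<sigma>' x)" for x
    using \<sigma> v(1) unfolding \<sigma>'_def wf_form_below_def by (auto intro: wf_form_subst simp: form_vars_subst)
  moreover have "tautology M (subst \<sigma>' p)" if "p \<in> set ps" for p
    using tautology_subst[OF M, of ?\<rho> "subst \<sigma> p"] ps that by (simp add: \<sigma>'_def subst_subst)
  moreover have "\<not> tautology M (subst \<sigma>' c)"
  proof
    assume "tautology M (subst \<sigma>' c)"
    moreover have "\<forall>y. y mod ?n < ?n" using v(1)[rule_format, of 0] by simp
    ultimately have "val M (\<lambda>y. y mod ?n) (subst \<sigma>' c) \<in> designated M"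
      unfolding tautology_def by (auto dest: spec[of _ "\<lambda>y. y mod ?n"])
    moreover have "val M (\<lambda>y. y mod ?n) (subst \<sigma>' c) = val M v (subst \<sigma> c)"
      using v(1) by (simp add: \<sigma>'_def val_subst)
    ultimately show False using v(2) by simp
  qed
  ultimately show ?thesis by blast
qed

lemma counterexample_with_height_bound:
  assumes M: "wf_logic ar M" and \<sigma>: "\<forall>x. wf_form_below ar (nvals M) (\<sigma> x)"
    and ps: "\<forall>p\<in>set ps. tautology M (subst \<sigma> p)" and c: "\<not> tautology M (subst \<sigma> c)"
  shows "\<exists>\<sigma>'. (\<forall>x. wf_form_below ar (nvals M) (\<sigma>' x) \<and> form_height (\<sigma>' x) \<le> nvals M ^ (nvals M ^ nvals M)) \<and>
    (\<forall>p\<in>set ps. tautology M (subst \<sigma>' p)) \<and> \<not> tautology M (subst \<sigma>' c)"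
proof -
  let ?n = "nvals M"
  have "?n > 0" using c unfolding tautology_def by auto
  then have "\<forall>x. \<exists>t. wf_form_below ar ?n t \<and> form_height t \<le> ?n ^ (?n ^ ?n) \<and>
      term_fun M t = term_fun M (\<sigma> x)"
    using low_height_form_with_same_term_fun[OF M _ \<sigma>[rule_format]] by blast
  then obtain \<sigma>' where \<sigma>': "\<forall>x. wf_form_below ar ?n (\<sigma>' x) \<and> form_height (\<sigma>' x) \<le> ?n ^ (?n ^ ?n) \<and>
      term_fun M (\<sigma>' x) = term_fun M (\<sigma> x)"
    by (metis choice)
  have "tautology M (subst \<sigma>' A) \<longleftrightarrow> tautology M (subst \<sigma> A)" for A
    using \<sigma> \<sigma>' by (intro tautology_subst_cong val_eq_if_term_fun_eq) auto
  then show ?thesis using \<sigma>' ps c by auto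
qed

definition subst_of_list :: "form list \<Rightarrow> nat \<Rightarrow> form" where
  "subst_of_list ts x = (if x < length ts then ts ! x else Var 0)"

lemma sound_rule_iff_small_instances:
  assumes M: "wf_logic ar M" and vars: "\<forall>p\<in>set ps. form_vars p \<subseteq> {..<V}" "form_vars c \<subseteq> {..<V}"
    and B: "\<And>t. wf_form_below ar (nvals M) t \<Longrightarrow> form_height t \<le> nvals M ^ (nvals M ^ nvals M) \<Longrightarrow>
      form_code t < B"
  shows "sound_rule ar M ps c \<longleftrightarrow>
    (\<forall>ts. length ts = V \<longrightarrow> (\<forall>t\<in>set ts. wf_form_below ar (nvals M) t \<and> form_code t < B) \<longrightarrow>
      (\<forall>A\<in>set ps. tautology M (subst (subst_of_list ts) A)) \<longrightarrow> tautology M (subst (subst_of_list ts) c))"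
  (is "_ \<longleftrightarrow> ?small")
proof
  assume "sound_rule ar M ps c"
  moreover have "wf_form ar (subst_of_list ts x)" if "\<forall>t\<in>set ts. wf_form_below ar (nvals M) t" for ts x
    using that by (simp add: subst_of_list_def wf_form_below_def)
  ultimately show ?small
    unfolding sound_rule_def by blast
next
  assume small: ?small
  show "sound_rule ar M ps c"
    unfolding sound_rule_def
  proof (intro allI impI, rule ccontr)
    fix \<sigma>
    assume "\<forall>x. wf_form ar (\<sigma> x)" "\<forall>A\<in>set ps. tautology M (subst \<sigma> A)" "\<not> tautology M (subst \<sigma> c)"
    then obtain \<sigma>1 where "\<forall>x. wf_form_below ar (nvals M) (\<sigma>1 x)"
      "\<forall>p\<in>set ps. tautology M (subst \<sigma>1 p)" "\<not> tautology M (subst \<sigma>1 c)"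
      using counterexample_with_vars_below_nvals[OF M] by blast
    then obtain \<sigma>' where
        \<sigma>': "\<forall>x. wf_form_below ar (nvals M) (\<sigma>' x) \<and> form_height (\<sigma>' x) \<le> nvals M ^ (nvals M ^ nvals M)"
      and ps: "\<forall>p\<in>set ps. tautology M (subst \<sigma>' p)" and c: "\<not> tautology M (subst \<sigma>' c)"
      using counterexample_with_height_bound[OF M] by blast
    let ?ts = "map \<sigma>' [0..<V]"
    have inst: "subst (subst_of_list ?ts) A = subst \<sigma>' A" if "form_vars A \<subseteq> {..<V}" for A
      using that by (intro subst_cong) (auto simp: subst_of_list_def)
    have "\<forall>t\<in>set ?ts. wf_form_below ar (nvals M) t \<and> form_code t < B"
      using \<sigma>' B by auto
    then have "tautology M (subst (subst_of_list ?ts) c)"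
      using small ps inst vars(1) by simp
    then show False using c inst[OF vars(2)] by simp
  qed
qed

lemma prod_encode_mono: "a \<le> a' \<Longrightarrow> b \<le> b' \<Longrightarrow> prod_encode (a, b) \<le> prod_encode (a', b')"
proof -
  assume "a \<le> a'" "b \<le> b'"
  then have "triangle (a + b) \<le> triangle (a' + b')"
    unfolding triangle_def by (intro div_le_mono mult_le_mono) simp_all
  then show ?thesis using \<open>a \<le> a'\<close> by (simp add: prod_encode_def)
qed

fun list_code_bound :: "nat \<Rightarrow> nat \<Rightarrow> nat" where
  "list_code_bound 0 b = 0"
| "list_code_bound (Suc L) b = Suc (prod_encode (b, list_code_bound L b))"

lemma list_encode_le_bound:
  "length xs \<le> L \<Longrightarrow> \<forall>y\<in>set xs. y \<le> b \<Longrightarrow> list_encode xs \<le> list_code_bound L b"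
proof (induction xs arbitrary: L)
  case (Cons x xs)
  then obtain L' where "L = Suc L'" by (cases L) auto
  with Cons show ?case by (simp add: prod_encode_mono)
qed simp

text \<open>Here A bounds both the number of connectives and their arities.\<close>

fun form_code_bound :: "nat \<Rightarrow> nat \<Rightarrow> nat \<Rightarrow> nat" where
  "form_code_bound A n 0 = prod_encode (0, n)"
| "form_code_bound A n (Suc h) =
    max (form_code_bound A n h) (prod_encode (A, list_code_bound A (form_code_bound A n h)))"

lemma computable_form_code_bound [computable_intros]:
  "computable k a \<Longrightarrow> computable k b \<Longrightarrow> computable k c \<Longrightarrow>
    computable k (\<lambda>e. form_code_bound (a e) (b e) (c e))"
proof (rule computable_compose3[where F=form_code_bound])
  have "rec_nat 0 (\<lambda>_ y. Suc (prod_encode (b, y))) L = list_code_bound L b" for L b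
    by (induction L) simp_all
  moreover have "rec_nat (prod_encode (0, n)) (\<lambda>_ y. max y (prod_encode (A, list_code_bound A y))) h =
      form_code_bound A n h" for A n h
    by (induction h) simp_all
  moreover have "computable 3 (\<lambda>e. rec_nat (prod_encode (0, e 1))
      (\<lambda>_ y. max y (prod_encode (e 0, rec_nat 0 (\<lambda>_ z. Suc (prod_encode (y, z))) (e 0)))) (e 2))"
    by (intro computable_intros) simp_all
  ultimately show "computable 3 (\<lambda>e. form_code_bound (e 0) (e 1) (e 2))"
    by (simp only:)
qed

lemma form_code_le_bound:
  assumes "wf_form_below ar n t" "form_height t \<le> h" "length ar \<le> A" "\<forall>a\<in>set ar. a \<le> A"
  shows "form_code t \<le> form_code_bound A n h"
  using assms(1,2)
proof (induction t arbitrary: h)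
  case (Var x)
  have "form_code (Var x) \<le> form_code_bound A n 0"
    using Var.prems(1) by (simp add: prod_encode_mono wf_form_below_def)
  also have "\<dots> \<le> form_code_bound A n h"
    by (rule lift_Suc_mono_le[of "form_code_bound A n"]) simp_all
  finally show ?case .
next
  case (App c args)
  obtain h' where h: "h = Suc h'" using App.prems(2) by (cases h) auto
  have c: "Suc c \<le> A" "length args \<le> A"
    using App.prems(1) assms(3,4) by (auto simp: wf_form_below_App)
  have "\<forall>y\<in>set (map form_code args). y \<le> form_code_bound A n h'"
    using App h by (auto simp: wf_form_below_App)
  then have "list_encode (map form_code args) \<le> list_code_bound A (form_code_bound A n h')"
    using c by (intro list_encode_le_bound) simp_all
  then show ?case using h c by (simp add: prod_encode_mono le_max_iff_disj)
qed

lemma form_code_arg_less: "a \<in> set args \<Longrightarrow> form_code a < form_code (App c args)"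
  using mem_less_list_encode[of "form_code a" "map form_code args"]
    le_prod_encode_2[of "list_encode (map form_code args)" "Suc c"]
  by simp

lemma var_le_form_code: "x \<in> form_vars t \<Longrightarrow> x \<le> form_code t"
proof (induction t)
  case (Var y)
  then show ?case using le_prod_encode_2[of y 0] by simp
next
  case (App c args)
  then obtain a where "a \<in> set args" "x \<in> form_vars a" by auto
  then show ?case using App.IH form_code_arg_less[of a args c] by fastforce
qed

lemma surj_form_code: "surj form_code"
proof -
  have "\<exists>t. form_code t = m" for m
  proof (induction m rule: less_induct)
    case (less m)
    obtain a b where ab: "prod_decode m = (a, b)" by fastforce
    then have m: "m = prod_encode (a, b)" by (metis prod_decode_inverse)
    show ?case
    proof (cases a)
      case 0
      then show ?thesis using m by (intro exI[of _ "Var b"]) simp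
    next
      case (Suc c)
      have "y < m" if "y \<in> set (list_decode b)" for y
        using mem_less_list_encode[OF that] le_prod_encode_2[of b a] m by simp
      then have "\<forall>y\<in>set (list_decode b). \<exists>t. form_code t = y"
        using less.IH by blast
      then obtain r where "\<forall>y\<in>set (list_decode b). form_code (r y) = y"
        by (metis bchoice)
      then have "map form_code (map r (list_decode b)) = list_decode b"
        by (simp add: map_idI)
      then have "form_code (App c (map r (list_decode b))) = m"
        using m Suc by simp
      then show ?thesis by blast
    qed
  qed
  then show ?thesis by (metis surjI)
qed

lemma code_nth_cov_history_arg:
  assumes "i < length args"
  shows "code_nth (cov_history G (form_code (App c args)))
      (form_code (App c args) - Suc (code_nth (list_encode (map form_code args)) i)) =
    cov_rec G (form_code (args ! i))"
proof -
  have "code_nth (list_encode (map form_code args)) i = form_code (args ! i)"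
    using assms by (simp add: code_nth_list_encode)
  then show ?thesis
    using code_nth_cov_history[OF form_code_arg_less[OF nth_mem[OF assms]]] by simp
qed

text \<open>One step of the course-of-values recursion evaluating the formula with code m under the
  valuation whose base-n digits are w; the value at each smaller code j is read off the history h
  at position m - Suc j.\<close>

definition val_step :: "nat \<Rightarrow> nat \<Rightarrow> nat \<Rightarrow> nat \<Rightarrow> nat \<Rightarrow> nat" where
  "val_step n T w m h =
    (if fst (prod_decode m) = 0 then digit n w (snd (prod_decode m))
     else code_nth (code_nth T (fst (prod_decode m) - 1))
       (rec_nat 0 (\<lambda>i acc. acc * n + code_nth h (m - Suc (code_nth (snd (prod_decode m)) i)))
         (code_length (snd (prod_decode m)))))"

definition val_code :: "nat \<Rightarrow> nat \<Rightarrow> nat \<Rightarrow> nat \<Rightarrow> nat" where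
  "val_code n T w = cov_rec (val_step n T w)"

definition wf_step :: "nat \<Rightarrow> nat \<Rightarrow> nat \<Rightarrow> nat \<Rightarrow> nat" where
  "wf_step AR N m h =
    (if fst (prod_decode m) = 0 then (if snd (prod_decode m) < N then 1 else 0)
     else if fst (prod_decode m) - 1 < code_length AR \<and>
        code_length (snd (prod_decode m)) = code_nth AR (fst (prod_decode m) - 1) \<and>
        (\<forall>i<code_length (snd (prod_decode m)). code_nth h (m - Suc (code_nth (snd (prod_decode m)) i)) = 1)
     then 1 else 0)"

definition wf_form_code :: "nat \<Rightarrow> nat \<Rightarrow> nat \<Rightarrow> nat" where
  "wf_form_code AR N = cov_rec (wf_step AR N)"

definition mem_code :: "nat \<Rightarrow> nat \<Rightarrow> bool" where
  "mem_code D v \<longleftrightarrow> (\<exists>i<code_length D. code_nth D i = v)"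

lemma computable_val_code [computable_intros]:
  "computable k a \<Longrightarrow> computable k b \<Longrightarrow> computable k c \<Longrightarrow> computable k d \<Longrightarrow>
    computable k (\<lambda>e. val_code (a e) (b e) (c e) (d e))"
  by (rule computable_compose4[where F=val_code])
    (unfold val_code_def val_step_def, intro computable_intros; simp)

lemma computable_wf_form_code [computable_intros]:
  "computable k a \<Longrightarrow> computable k b \<Longrightarrow> computable k c \<Longrightarrow>
    computable k (\<lambda>e. wf_form_code (a e) (b e) (c e))"
  by (rule computable_compose3[where F=wf_form_code])
    (unfold wf_form_code_def wf_step_def, intro computable_intros; simp)

lemma computable_mem_code [computable_intros]:
  assumes "computable k a" "computable k b"
  shows "computable_pred k (\<lambda>e. mem_code (a e) (b e))"
  unfolding computable_pred_def
proof (rule computable_compose2[OF _ assms])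
  show "computable 2 (\<lambda>e. if mem_code (e 0) (e 1) then 1 else 0)"
    unfolding mem_code_def by (intro computable_intros) simp_all
qed

abbreviation designated_code :: "logic \<Rightarrow> nat" where
  "designated_code M \<equiv> list_encode (fst (snd M))"

abbreviation tables_code :: "logic \<Rightarrow> nat" where
  "tables_code M \<equiv> list_encode (map list_encode (tables M))"

lemma mem_code_list_encode: "mem_code (list_encode ds) v \<longleftrightarrow> v \<in> set ds"
  unfolding mem_code_def by (auto simp: code_length_list_encode code_nth_list_encode in_set_conv_nth)

lemma rec_nat_eq_tuple_index:
  "(\<And>i. i < length xs \<Longrightarrow> f i = xs ! i) \<Longrightarrow> rec_nat 0 (\<lambda>i acc. acc * n + f i) (length xs) = tuple_index n xs"
proof (induction xs rule: rev_induct)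
  case (snoc x xs)
  then show ?case by (simp add: tuple_index_def nth_append)
qed (simp add: tuple_index_def)

lemma val_code_form_code:
  assumes M: "wf_logic ar M" "nvals M > 0" and "wf_form ar t"
  shows "val_code (nvals M) (tables_code M) w (form_code t) = val M (digit (nvals M) w) t"
  using assms(3)
proof (induction t)
  case (Var x)
  then show ?case by (simp add: val_code_def cov_rec_def val_step_def)
next
  case (App c args)
  let ?n = "nvals M" and ?G = "val_step (nvals M) (tables_code M) w"
  let ?vs = "map (val M (digit ?n w)) args"
  have c: "c < length ar" "length args = ar ! c" "\<forall>a\<in>set args. wf_form ar a"
    using App.prems by (simp_all add: list_all_iff)
  have table: "length (tables M) = length ar" "length (tables M ! c) = ?n ^ length args"
    using M(1) c unfolding wf_logic_def by simp_all
  have "code_nth (cov_history ?G (form_code (App c args)))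
      (form_code (App c args) - Suc (code_nth (list_encode (map form_code args)) i)) = ?vs ! i"
    if "i < length args" for i
    using that App.IH c(3) by (simp add: code_nth_cov_history_arg val_code_def del: form_code.simps)
  then have "rec_nat 0 (\<lambda>i acc. acc * ?n + code_nth (cov_history ?G (form_code (App c args)))
      (form_code (App c args) - Suc (code_nth (list_encode (map form_code args)) i))) (length ?vs) =
    tuple_index ?n ?vs"
    by (intro rec_nat_eq_tuple_index) simp
  then have "val_code ?n (tables_code M) w (form_code (App c args)) =
      code_nth (code_nth (tables_code M) c) (tuple_index ?n ?vs)"
    by (simp add: val_code_def cov_rec_def val_step_def code_length_list_encode)
  also have "\<dots> = tables M ! c ! tuple_index ?n ?vs"
    using tuple_index_less[of ?vs ?n] table c M
    by (simp add: code_nth_list_encode val_less_nvals digit_less)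
  finally show ?case by (simp add: truth_fun_def)
qed

lemma wf_form_code_form_code:
  "wf_form_code (list_encode ar) N (form_code t) = (if wf_form_below ar N t then 1 else 0)"
proof (induction t)
  case (Var x)
  then show ?case by (simp add: wf_form_code_def cov_rec_def wf_step_def wf_form_below_def)
next
  case (App c args)
  let ?G = "wf_step (list_encode ar) N"
  have "code_nth (cov_history ?G (form_code (App c args)))
      (form_code (App c args) - Suc (code_nth (list_encode (map form_code args)) i)) = 1 \<longleftrightarrow>
    wf_form_below ar N (args ! i)" if "i < length args" for i
    using that App.IH by (simp add: code_nth_cov_history_arg wf_form_code_def del: form_code.simps)
  then show ?case
    by (auto simp: wf_form_code_def cov_rec_def wf_step_def code_length_list_encode code_nth_list_encode
        wf_form_below_App all_set_conv_all_nth)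
qed

lemma from_digits_cong: "(\<And>x. x < N \<Longrightarrow> f x = g x) \<Longrightarrow> from_digits n f N = from_digits n g N"
  by (simp add: from_digits_def)

lemma tautology_instance_iff_digits:
  assumes M: "wf_logic ar M" "nvals M > 0"
    and ts: "length ts = V" "\<forall>t\<in>set ts. wf_form_below ar (nvals M) t" and A: "form_vars A \<subseteq> {..<V}"
  shows "tautology M (subst (subst_of_list ts) A) \<longleftrightarrow>
    (\<forall>w<nvals M ^ nvals M.
      val M (digit (nvals M) (from_digits (nvals M) (\<lambda>x. val M (digit (nvals M) w) (ts ! x)) V)) A
      \<in> designated M)"
proof -
  let ?n = "nvals M"
  have ts_x: "subst_of_list ts x = ts ! x" "wf_form_below ar ?n (ts ! x)" if "x \<in> form_vars A" for x
    using that A ts by (auto simp: subst_of_list_def)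
  have "form_vars (subst (subst_of_list ts) A) \<subseteq> {..<?n}"
    using ts_x by (auto simp: form_vars_subst wf_form_below_def)
  moreover have "val M (digit ?n w) (subst (subst_of_list ts) A) =
      val M (digit ?n (from_digits ?n (\<lambda>x. val M (digit ?n w) (ts ! x)) V)) A" for w
  proof -
    have "val M (digit ?n w) (ts ! x) < ?n" if "x < V" for x
      using ts that M by (auto simp: wf_form_below_def intro!: val_less_nvals digit_less)
    then show ?thesis
      unfolding val_subst using A ts_x by (intro val_cong) (auto simp: digit_from_digits)
  qed
  ultimately show ?thesis by (simp add: tautology_iff_digits[OF M(2)])
qed

definition tautology_code :: "nat \<Rightarrow> nat \<Rightarrow> nat \<Rightarrow> nat \<Rightarrow> nat \<Rightarrow> bool" where
  "tautology_code n D T V a \<longleftrightarrow> (\<forall>w<n ^ V. mem_code D (val_code n T w a))"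

text \<open>The number s holds, as base-B digits, the codes of formulas t_0, ..., t_(V-1); this checks
  that the substitution instance A[t_x/X_x] of the formula with code a is a tautology, by evaluating
  A under the valuation of X_x to the value of t_x, for every valuation of X_0, ..., X_(n-1).\<close>

definition instance_tautology_code :: "nat \<Rightarrow> nat \<Rightarrow> nat \<Rightarrow> nat \<Rightarrow> nat \<Rightarrow> nat \<Rightarrow> nat \<Rightarrow> bool" where
  "instance_tautology_code n D T V B s a \<longleftrightarrow>
    (\<forall>w<n ^ n. mem_code D (val_code n T (from_digits n (\<lambda>x. val_code n T w (digit B s x)) V) a))"

definition sound_rule_code :: "nat \<Rightarrow> nat \<Rightarrow> nat \<Rightarrow> nat \<Rightarrow> nat \<Rightarrow> nat \<Rightarrow> nat \<Rightarrow> bool" where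
  "sound_rule_code AR n D T V B r \<longleftrightarrow> (\<forall>s<B ^ V. (\<forall>x<V. wf_form_code AR n (digit B s x) = 1) \<longrightarrow>
     (\<forall>i<code_length (fst (prod_decode r)).
        instance_tautology_code n D T V B s (code_nth (fst (prod_decode r)) i)) \<longrightarrow>
     instance_tautology_code n D T V B s (snd (prod_decode r)))"

lemma tautology_code_iff:
  assumes "wf_logic ar M" "nvals M > 0" "wf_form ar A" "form_vars A \<subseteq> {..<V}"
  shows "tautology_code (nvals M) (designated_code M) (tables_code M) V (form_code A) \<longleftrightarrow> tautology M A"
  using assms
  by (simp add: tautology_code_def tautology_iff_digits val_code_form_code mem_code_list_encode designated_def)

lemma instance_tautology_code_iff:
  assumes M: "wf_logic ar M" "nvals M > 0"
    and ts: "length ts = V" "\<forall>t\<in>set ts. wf_form_below ar (nvals M) t" "\<forall>x<V. digit B s x = form_code (ts ! x)"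
    and A: "wf_form ar A" "form_vars A \<subseteq> {..<V}"
  shows "instance_tautology_code (nvals M) (designated_code M) (tables_code M) V B s (form_code A) \<longleftrightarrow>
    tautology M (subst (subst_of_list ts) A)"
proof -
  let ?n = "nvals M"
  have "from_digits ?n (\<lambda>x. val_code ?n (tables_code M) w (digit B s x)) V =
      from_digits ?n (\<lambda>x. val M (digit ?n w) (ts ! x)) V" for w
    using ts by (intro from_digits_cong) (simp add: val_code_form_code[OF M] wf_form_below_def)
  then show ?thesis
    unfolding tautology_instance_iff_digits[OF M ts(1,2) A(2)] instance_tautology_code_def
    by (simp add: val_code_form_code[OF M A(1)] mem_code_list_encode designated_def)
qed

lemma wf_form_code_digits_iff:
  assumes "length ts = V" "\<forall>x<V. digit B s x = form_code (ts ! x)"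
  shows "(\<forall>x<V. wf_form_code (list_encode ar) N (digit B s x) = 1) \<longleftrightarrow> (\<forall>t\<in>set ts. wf_form_below ar N t)"
  using assms by (auto simp: wf_form_code_form_code all_set_conv_all_nth)

definition rule_code :: "form list \<times> form \<Rightarrow> nat" where
  "rule_code r = prod_encode (list_encode (map form_code (fst r)), form_code (snd r))"

lemma sound_rule_code_rule_code:
  "sound_rule_code AR n D T V B (rule_code (ps, c)) \<longleftrightarrow>
    (\<forall>s<B ^ V. (\<forall>x<V. wf_form_code AR n (digit B s x) = 1) \<longrightarrow>
      (\<forall>A\<in>set ps. instance_tautology_code n D T V B s (form_code A)) \<longrightarrow>
      instance_tautology_code n D T V B s (form_code c))"
  by (simp add: sound_rule_code_def rule_code_def ball_code_nth_list_encode)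

lemma rule_instance_code_iff:
  assumes M: "wf_logic ar M" "nvals M > 0"
    and ps: "\<forall>p\<in>set ps. wf_form ar p \<and> form_vars p \<subseteq> {..<V}" and c: "wf_form ar c" "form_vars c \<subseteq> {..<V}"
    and ts: "length ts = V" and digits: "\<forall>x<V. digit B s x = form_code (ts ! x)"
  shows "((\<forall>x<V. wf_form_code (list_encode ar) (nvals M) (digit B s x) = 1) \<longrightarrow>
      (\<forall>A\<in>set ps. instance_tautology_code (nvals M) (designated_code M) (tables_code M) V B s (form_code A)) \<longrightarrow>
      instance_tautology_code (nvals M) (designated_code M) (tables_code M) V B s (form_code c)) \<longleftrightarrow>
    ((\<forall>t\<in>set ts. wf_form_below ar (nvals M) t) \<longrightarrow>
      (\<forall>A\<in>set ps. tautology M (subst (subst_of_list ts) A)) \<longrightarrow> tautology M (subst (subst_of_list ts) c))"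
proof (cases "\<forall>t\<in>set ts. wf_form_below ar (nvals M) t")
  case True
  then show ?thesis
    using wf_form_code_digits_iff[OF ts digits] instance_tautology_code_iff[OF M ts True digits] ps c by simp
qed (use wf_form_code_digits_iff[OF ts digits] in auto)

lemma sound_rule_code_iff:
  assumes M: "wf_logic ar M" "nvals M > 0" and "B > 0"
    and ps: "\<forall>p\<in>set ps. wf_form ar p \<and> form_vars p \<subseteq> {..<V}" and c: "wf_form ar c" "form_vars c \<subseteq> {..<V}"
  shows "sound_rule_code (list_encode ar) (nvals M) (designated_code M) (tables_code M) V B
      (rule_code (ps, c)) \<longleftrightarrow>
    (\<forall>ts. length ts = V \<longrightarrow> (\<forall>t\<in>set ts. wf_form_below ar (nvals M) t \<and> form_code t < B) \<longrightarrow>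
      (\<forall>A\<in>set ps. tautology M (subst (subst_of_list ts) A)) \<longrightarrow> tautology M (subst (subst_of_list ts) c))"
  unfolding sound_rule_code_rule_code
proof (intro iffI allI impI)
  fix ts
  assume code: "\<forall>s<B ^ V. (\<forall>x<V. wf_form_code (list_encode ar) (nvals M) (digit B s x) = 1) \<longrightarrow>
      (\<forall>A\<in>set ps. instance_tautology_code (nvals M) (designated_code M) (tables_code M) V B s (form_code A)) \<longrightarrow>
      instance_tautology_code (nvals M) (designated_code M) (tables_code M) V B s (form_code c)"
    and ts: "length ts = V" "\<forall>t\<in>set ts. wf_form_below ar (nvals M) t \<and> form_code t < B"
    and prems: "\<forall>A\<in>set ps. tautology M (subst (subst_of_list ts) A)"
  let ?s = "from_digits B (\<lambda>x. form_code (ts ! x)) V"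
  have "\<forall>x<V. digit B ?s x = form_code (ts ! x)" and "?s < B ^ V"
    using ts by (simp_all add: digit_from_digits from_digits_less)
  with code ts prems show "tautology M (subst (subst_of_list ts) c)"
    using rule_instance_code_iff[OF M ps c ts(1)] by blast
next
  fix s
  assume sem: "\<forall>ts. length ts = V \<longrightarrow> (\<forall>t\<in>set ts. wf_form_below ar (nvals M) t \<and> form_code t < B) \<longrightarrow>
      (\<forall>A\<in>set ps. tautology M (subst (subst_of_list ts) A)) \<longrightarrow> tautology M (subst (subst_of_list ts) c)"
    and "s < B ^ V" and code_prems: "\<forall>x<V. wf_form_code (list_encode ar) (nvals M) (digit B s x) = 1"
      "\<forall>A\<in>set ps. instance_tautology_code (nvals M) (designated_code M) (tables_code M) V B s (form_code A)"
  obtain dec where dec: "\<And>m. form_code (dec m) = m"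
    using surj_form_code by (metis surj_def)
  let ?ts = "map (\<lambda>x. dec (digit B s x)) [0..<V]"
  have "\<forall>t\<in>set ?ts. form_code t < B"
    using \<open>B > 0\<close> by (auto simp: dec digit_less)
  with sem have "(\<forall>t\<in>set ?ts. wf_form_below ar (nvals M) t) \<longrightarrow>
      (\<forall>A\<in>set ps. tautology M (subst (subst_of_list ?ts) A)) \<longrightarrow> tautology M (subst (subst_of_list ?ts) c)"
    by simp
  then show "instance_tautology_code (nvals M) (designated_code M) (tables_code M) V B s (form_code c)"
    using rule_instance_code_iff[OF M ps c, where ts="?ts" and s=s and B=B] code_prems by (simp add: dec)
qed

section \<open>The decision procedure\<close>

text \<open>All variables of the calculus are below V = Suc X, as a variable never exceeds the code of a
  formula containing it, and B bounds the codes of the formulas of height at most n ^ (n ^ n) in the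
  variables below n. For n = 0 there are no valuations, so every formula is a tautology.\<close>

definition t_sound_code :: "nat \<Rightarrow> nat" where
  "t_sound_code X =
    (let AR = fst (prod_decode X); CC = fst (prod_decode (snd (prod_decode X)));
         LC = snd (prod_decode (snd (prod_decode X))); n = fst (prod_decode LC);
         D = fst (prod_decode (snd (prod_decode LC))); T = snd (prod_decode (snd (prod_decode LC)));
         V = Suc X; B = Suc (form_code_bound AR n (n ^ (n ^ n))) in
     if n = 0 \<or>
        ((\<forall>i<code_length (fst (prod_decode CC)). tautology_code n D T V (code_nth (fst (prod_decode CC)) i)) \<and>
         (\<forall>i<code_length (snd (prod_decode CC)).
            sound_rule_code AR n D T V B (code_nth (snd (prod_decode CC)) i)))
     then 1 else 0)"

lemma computable_t_sound_code: "computable 1 (\<lambda>e. t_sound_code (e 0))"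
  unfolding t_sound_code_def sound_rule_code_def instance_tautology_code_def tautology_code_def
  by (intro computable_intros; simp)

lemma calc_code_eq:
  "calc_code C = prod_encode (list_encode (map form_code (fst C)), list_encode (map rule_code (snd C)))"
  unfolding calc_code_def rule_code_def by (simp add: case_prod_unfold)

lemma logic_code_eq: "logic_code M = prod_encode (nvals M, prod_encode (designated_code M, tables_code M))"
  unfolding logic_code_def nvals_def tables_def ..

lemma t_sound_code_input_code:
  "t_sound_code (input_code ar C M) =
    (let n = nvals M; V = Suc (input_code ar C M); B = Suc (form_code_bound (list_encode ar) n (n ^ (n ^ n))) in
     if n = 0 \<or>
        ((\<forall>A\<in>set (fst C). tautology_code n (designated_code M) (tables_code M) V (form_code A)) \<and>
         (\<forall>r\<in>set (snd C).
            sound_rule_code (list_encode ar) n (designated_code M) (tables_code M) V B (rule_code r)))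
     then 1 else 0)"
proof -
  have "prod_decode (input_code ar C M) = (list_encode ar, prod_encode (calc_code C, logic_code M))"
    by (simp add: input_code_def)
  then show ?thesis
    unfolding t_sound_code_def Let_def by (simp add: calc_code_eq logic_code_eq ball_code_nth_list_encode)
qed

definition calc_forms :: "calculus \<Rightarrow> form set" where
  "calc_forms C = set (fst C) \<union> (\<Union>(ps, c)\<in>set (snd C). insert c (set ps))"

lemma form_code_le_rule_code: "A \<in> insert c (set ps) \<Longrightarrow> form_code A \<le> rule_code (ps, c)"
  using mem_less_list_encode[of "form_code A" "map form_code ps"]
    le_prod_encode_1[of "list_encode (map form_code ps)" "form_code c"] le_prod_encode_2[of "form_code c"]
  by (auto simp: rule_code_def)

lemma form_code_le_input_code:
  assumes "A \<in> calc_forms C"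
  shows "form_code A \<le> input_code ar C M"
proof -
  have "form_code A \<le> calc_code C"
    using assms unfolding calc_forms_def
  proof (elim UnE UN_E)
    assume "A \<in> set (fst C)"
    then show ?thesis
      using mem_less_list_encode[of "form_code A" "map form_code (fst C)"] le_prod_encode_1
      unfolding calc_code_eq by (metis image_eqI le_trans less_imp_le set_map)
  next
    fix r assume r: "r \<in> set (snd C)" "A \<in> (case r of (ps, c) \<Rightarrow> insert c (set ps))"
    then have "form_code A \<le> rule_code r"
      by (auto simp: form_code_le_rule_code split: prod.splits)
    also have "rule_code r \<le> calc_code C"
      using mem_less_list_encode[of "rule_code r" "map rule_code (snd C)"] le_prod_encode_2 r(1)
      unfolding calc_code_eq by (metis image_eqI le_trans less_imp_le set_map)
    finally show ?thesis .
  qed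
  also have "calc_code C \<le> input_code ar C M"
    unfolding input_code_def using le_prod_encode_1 le_prod_encode_2 le_trans by blast
  finally show ?thesis .
qed

lemma t_sound_code_correct:
  assumes C: "wf_calc ar C" and M: "wf_logic ar M"
  shows "t_sound_code (input_code ar C M) = (if t_sound ar C M then 1 else 0)"
proof (cases "nvals M = 0")
  case True
  then have "t_sound ar C M" by (simp add: t_sound_def tautology_def)
  then show ?thesis using True by (simp add: t_sound_code_input_code)
next
  case False
  then have n: "nvals M > 0" by simp
  define V where "V = Suc (input_code ar C M)"
  define B where "B = Suc (form_code_bound (list_encode ar) (nvals M) (nvals M ^ (nvals M ^ nvals M)))"
  have wf: "wf_form ar A" and vars: "form_vars A \<subseteq> {..<V}" if "A \<in> calc_forms C" for A
    using C that var_le_form_code form_code_le_input_code[OF that, of ar M]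
    by (fastforce simp: wf_calc_def calc_forms_def list_all_iff V_def)+
  have B: "form_code t < B"
    if "wf_form_below ar (nvals M) t" "form_height t \<le> nvals M ^ (nvals M ^ nvals M)" for t
    using form_code_le_bound[OF that] length_le_list_encode mem_less_list_encode
    unfolding B_def by (simp add: le_imp_less_Suc less_imp_le)
  have "tautology_code (nvals M) (designated_code M) (tables_code M) V (form_code A) \<longleftrightarrow> tautology M A"
    if "A \<in> set (fst C)" for A
    using that wf vars by (intro tautology_code_iff[OF M n]) (auto simp: calc_forms_def)
  moreover have "sound_rule_code (list_encode ar) (nvals M) (designated_code M) (tables_code M) V B
      (rule_code r) \<longleftrightarrow> sound_rule ar M (fst r) (snd r)" if "r \<in> set (snd C)" for r
  proof -
    obtain ps c where "r = (ps, c)" by fastforce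
    with that have that: "(ps, c) \<in> set (snd C)" by simp
    have ps: "\<forall>p\<in>set ps. wf_form ar p \<and> form_vars p \<subseteq> {..<V}" and c: "wf_form ar c" "form_vars c \<subseteq> {..<V}"
      using that wf vars unfolding calc_forms_def by blast+
    have "B > 0" by (simp add: B_def)
    show ?thesis
      using sound_rule_code_iff[OF M n \<open>B > 0\<close> ps c] sound_rule_iff_small_instances[OF M _ c(2) B] ps
        \<open>r = (ps, c)\<close> by simp
  qed
  ultimately show ?thesis
    using False unfolding t_sound_code_input_code t_sound_iff_sound_rules V_def B_def Let_def
    by (simp add: case_prod_unfold)
qed

theorem proposition5:
  shows "\<exists>f :: recf. \<forall>ar C M. wf_calc ar C \<and> wf_logic ar M \<longrightarrow>
           rec_eval f [input_code ar C M] (if t_sound ar C M then 1 else 0)"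
proof -
  obtain f where f: "\<forall>e. rec_eval f (map e [0..<1]) (t_sound_code (e 0))"
    using computable_t_sound_code unfolding computable_def by blast
  have "rec_eval f [X] (t_sound_code X)" for X
    using f[rule_format, of "\<lambda>_. X"] by simp
  then show ?thesis
    using t_sound_code_correct by metis
qed

end
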